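(* Let $G$ be a finite, simple, connected graph with a fixed root $r\in V(G)$. Then every bunch $B$ of any level $n$ satisfies $\max_{p,q\in B} d_G(p,q)\le W(G)+2$.
   Context: The level of $x$ is $\ell(x)=d_G(r,x)$. For $n\ge0$, $R(n)$ is the set of edges $xy$ with $\max\{\ell(x),\ell(y)\}>n$. Blocks of level $n$ are the equivalence classes of the level-$n$ vertices under: $x\sim y$ iff $x=y$ or $x,y$ are joined by a path with all edges in $R(n)$. Bunches of level $n$ are unions of blocks of level $n$ forming the classes of the transitive closure of "there is an edge of $G$ between the two blocks". For a root $r'$ and its levels $\ell_{r'}$ and sets $R_{r'}(n)$, write $x\simeq_n y$ if $x,y$ are in the same connected component of $(V(G),R_{r'}(n))$; $W(r')=\max_{n\ge0}\max\{d_G(x,y):\ell_{r'}(x)=\ell_{r'}(y)=n,\ x\simeq_n y\}$, and the cycle width is $W(G)=\max_{r'\in V(G)} W(r')$. *)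

theory Defs
  imports Main
begin

definition simple_graph :: "'a set \<Rightarrow> ('a \<Rightarrow> 'a \<Rightarrow> bool) \<Rightarrow> bool" where
  "simple_graph V E \<longleftrightarrow> finite V \<and> (\<forall>x y. E x y \<longrightarrow> x \<in> V \<and> y \<in> V)
     \<and> (\<forall>x y. E x y \<longrightarrow> E y x) \<and> (\<forall>x. \<not> E x x)"

definition connected_graph :: "'a set \<Rightarrow> ('a \<Rightarrow> 'a \<Rightarrow> bool) \<Rightarrow> bool" where
  "connected_graph V E \<longleftrightarrow> V \<noteq> {} \<and> (\<forall>x\<in>V. \<forall>y\<in>V. E\<^sup>*\<^sup>* x y)"

definition gdist :: "('a \<Rightarrow> 'a \<Rightarrow> bool) \<Rightarrow> 'a \<Rightarrow> 'a \<Rightarrow> nat" where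
  "gdist E x y = (LEAST k. \<exists>p. length p = Suc k \<and> hd p = x \<and> last p = y \<and> successively E p)"

definition level :: "('a \<Rightarrow> 'a \<Rightarrow> bool) \<Rightarrow> 'a \<Rightarrow> 'a \<Rightarrow> nat" where
  "level E r x = gdist E r x"

definition Redge :: "('a \<Rightarrow> 'a \<Rightarrow> bool) \<Rightarrow> 'a \<Rightarrow> nat \<Rightarrow> 'a \<Rightarrow> 'a \<Rightarrow> bool" where
  "Redge E r n x y \<longleftrightarrow> E x y \<and> max (level E r x) (level E r y) > n"

definition Rconn :: "('a \<Rightarrow> 'a \<Rightarrow> bool) \<Rightarrow> 'a \<Rightarrow> nat \<Rightarrow> 'a \<Rightarrow> 'a \<Rightarrow> bool" where
  "Rconn E r n x y \<longleftrightarrow> (Redge E r n)\<^sup>*\<^sup>* x y"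

definition level_set :: "'a set \<Rightarrow> ('a \<Rightarrow> 'a \<Rightarrow> bool) \<Rightarrow> 'a \<Rightarrow> nat \<Rightarrow> 'a set" where
  "level_set V E r n = {x \<in> V. level E r x = n}"

definition blocks :: "'a set \<Rightarrow> ('a \<Rightarrow> 'a \<Rightarrow> bool) \<Rightarrow> 'a \<Rightarrow> nat \<Rightarrow> 'a set set" where
  "blocks V E r n = {{y \<in> level_set V E r n. Rconn E r n x y} | x. x \<in> level_set V E r n}"

definition block_adj :: "'a set \<Rightarrow> ('a \<Rightarrow> 'a \<Rightarrow> bool) \<Rightarrow> 'a \<Rightarrow> nat \<Rightarrow> ('a set \<times> 'a set) set" where
  "block_adj V E r n = {(B1, B2). B1 \<in> blocks V E r n \<and> B2 \<in> blocks V E r n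
      \<and> (\<exists>x\<in>B1. \<exists>y\<in>B2. E x y)}"

definition bunches :: "'a set \<Rightarrow> ('a \<Rightarrow> 'a \<Rightarrow> bool) \<Rightarrow> 'a \<Rightarrow> nat \<Rightarrow> 'a set set" where
  "bunches V E r n = {\<Union> {B. (B0, B) \<in> (block_adj V E r n)\<^sup>*} | B0. B0 \<in> blocks V E r n}"

definition W_root :: "'a set \<Rightarrow> ('a \<Rightarrow> 'a \<Rightarrow> bool) \<Rightarrow> 'a \<Rightarrow> nat" where
  "W_root V E r' = Max {gdist E x y | x y n. x \<in> V \<and> y \<in> V \<and> level E r' x = n \<and>
      level E r' y = n \<and> Rconn E r' n x y}"

definition cycle_width :: "'a set \<Rightarrow> ('a \<Rightarrow> 'a \<Rightarrow> bool) \<Rightarrow> nat" where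
  "cycle_width V E = Max (W_root V E ` V)"

end

theory Submission
  imports Defs
begin

text \<open>Every vertex of a bunch of level \<open>n\<close> has level \<open>n\<close>, and the edges joining two blocks of
  the bunch run between vertices of level \<open>n\<close>; for \<open>n \<ge> 1\<close> they therefore lie in \<open>R(n - 1)\<close>, as
  do the edges inside a block. So any two vertices \<open>p\<close>, \<open>q\<close> of the bunch are connected in
  \<open>R(n - 1)\<close>, and so are their parents \<open>p'\<close>, \<open>q'\<close> on level \<open>n - 1\<close> (through the edges \<open>p'p\<close> and
  \<open>qq'\<close>). Hence \<open>d(p', q') \<le> W(r) \<le> W(G)\<close> and \<open>d(p, q) \<le> d(p', q') + 2\<close>. At level 0 the only
  vertex is the root.\<close>

definition walk :: "('a \<Rightarrow> 'a \<Rightarrow> bool) \<Rightarrow> 'a \<Rightarrow> 'a \<Rightarrow> nat \<Rightarrow> bool" where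
  "walk E x y k \<longleftrightarrow> (\<exists>p. length p = Suc k \<and> hd p = x \<and> last p = y \<and> successively E p)"

lemma gdist_eq_Least_walk: "gdist E x y = (LEAST k. walk E x y k)"
  unfolding gdist_def walk_def by simp

lemma gdist_le_walk: "walk E x y k \<Longrightarrow> gdist E x y \<le> k"
  unfolding gdist_eq_Least_walk by (rule Least_le)

lemma walk_gdist: "walk E x y k \<Longrightarrow> walk E x y (gdist E x y)"
  unfolding gdist_eq_Least_walk by (rule LeastI)

lemma walk_0_iff: "walk E x y 0 \<longleftrightarrow> x = y"
  unfolding walk_def by (auto simp: length_Suc_conv)

lemma walk_snoc:
  assumes "walk E x y k" "E y z" shows "walk E x z (Suc k)"
proof -
  obtain p where p: "length p = Suc k" "hd p = x" "last p = y" "successively E p"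
    using assms(1) unfolding walk_def by blast
  then have "p \<noteq> []" by auto
  with p assms(2) show ?thesis
    unfolding walk_def by (intro exI[of _ "p @ [z]"]) (auto simp: successively_append_iff)
qed

lemma walk_Cons:
  assumes "E x y" "walk E y z k" shows "walk E x z (Suc k)"
proof -
  obtain p where p: "length p = Suc k" "hd p = y" "last p = z" "successively E p"
    using assms(2) unfolding walk_def by blast
  then have "p \<noteq> []" by auto
  with p assms(1) show ?thesis
    unfolding walk_def by (intro exI[of _ "x # p"]) (auto simp: successively_Cons)
qed

lemma walk_SucE:
  assumes "walk E x y (Suc k)"
  obtains z where "walk E x z k" "E z y"
proof -
  obtain p where p: "length p = Suc (Suc k)" "hd p = x" "last p = y" "successively E p"
    using assms unfolding walk_def by blast
  then obtain q where q: "p = q @ [y]" "length q = Suc k"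
    by (metis append_butlast_last_id length_butlast list.size(3) nat.distinct(1) diff_Suc_1)
  have "q \<noteq> []"
    using q(2) by auto
  have "hd q = x"
    using p(2) q(1) \<open>q \<noteq> []\<close> by simp
  moreover have "successively E q" "E (last q) y"
    using p(4) \<open>q \<noteq> []\<close> unfolding q(1) by (simp_all add: successively_append_iff)
  ultimately show thesis
    using that q(2) unfolding walk_def by blast
qed

lemma walk_of_rtranclp: "E\<^sup>*\<^sup>* x y \<Longrightarrow> \<exists>k. walk E x y k"
proof (induction rule: rtranclp_induct)
  case base
  have "walk E x x 0"
    by (simp add: walk_0_iff)
  then show ?case ..
next
  case (step y z)
  then obtain k where "walk E x y k"
    by blast
  then have "walk E x z (Suc k)"
    using step(2) by (rule walk_snoc)
  then show ?case ..
qed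

lemma gdist_self: "gdist E x x = 0"
  using gdist_le_walk[of E x x 0] by (simp add: walk_0_iff)

lemma gdist_eq_0_imp_eq:
  assumes "E\<^sup>*\<^sup>* x y" "gdist E x y = 0" shows "x = y"
proof -
  obtain k where "walk E x y k"
    using walk_of_rtranclp[OF assms(1)] by blast
  then have "walk E x y 0"
    using walk_gdist assms(2) by fastforce
  then show ?thesis
    by (simp add: walk_0_iff)
qed

lemma gdist_le_gdist_add_2:
  assumes "E p p'" "E q' q" "E\<^sup>*\<^sup>* p' q'"
  shows "gdist E p q \<le> gdist E p' q' + 2"
proof -
  obtain k where "walk E p' q' k"
    using walk_of_rtranclp[OF assms(3)] by blast
  then have "walk E p q (Suc (Suc (gdist E p' q')))"
    using assms(1,2) by (blast intro: walk_Cons walk_snoc walk_gdist)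
  then show ?thesis
    using gdist_le_walk by fastforce
qed

lemma level_parentE:
  assumes "E\<^sup>*\<^sup>* r p" "level E r p = Suc m"
  obtains p' where "E p' p" "level E r p' = m"
proof -
  obtain k where "walk E r p k"
    using walk_of_rtranclp[OF assms(1)] by blast
  then have "walk E r p (Suc m)"
    using assms(2) walk_gdist unfolding level_def by metis
  then obtain p' where p': "walk E r p' m" "E p' p"
    by (rule walk_SucE)
  have "walk E r p (Suc (gdist E r p'))"
    using p' by (blast intro: walk_snoc walk_gdist)
  then have "Suc m \<le> Suc (gdist E r p')"
    using assms(2) gdist_le_walk unfolding level_def by metis
  moreover have "gdist E r p' \<le> m"
    using p'(1) by (rule gdist_le_walk)
  ultimately show thesis
    using that p'(2) unfolding level_def by simp
qed

lemma level_set_0_subset: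
  assumes "connected_graph V E" "r \<in> V"
  shows "level_set V E r 0 \<subseteq> {r}"
proof
  fix x assume "x \<in> level_set V E r 0"
  then have "x \<in> V" "gdist E r x = 0"
    unfolding level_set_def level_def by auto
  moreover have "E\<^sup>*\<^sup>* r x"
    using assms \<open>x \<in> V\<close> unfolding connected_graph_def by blast
  ultimately show "x \<in> {r}"
    using gdist_eq_0_imp_eq by fastforce
qed

lemma symp_Redge: "symp E \<Longrightarrow> symp (Redge E r n)"
  unfolding Redge_def symp_def by (auto simp: max.commute)

lemma Redge_Suc_le: "Redge E r (Suc m) \<le> Redge E r m"
  unfolding Redge_def by auto

lemma Redge_if_level_Suc: "level E r x = Suc m \<Longrightarrow> E x y \<Longrightarrow> Redge E r m x y"
  unfolding Redge_def by simp

lemma Rconn_sym: "symp E \<Longrightarrow> Rconn E r n x y \<Longrightarrow> Rconn E r n y x"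
  unfolding Rconn_def by (rule sympD[OF symp_rtranclp[OF symp_Redge]])

lemma Rconn_trans: "Rconn E r n x y \<Longrightarrow> Rconn E r n y z \<Longrightarrow> Rconn E r n x z"
  unfolding Rconn_def by (rule rtranclp_trans)

lemma Rconn_if_Redge: "Redge E r n x y \<Longrightarrow> Rconn E r n x y"
  unfolding Rconn_def by (rule r_into_rtranclp)

lemma Rconn_Suc_imp: "Rconn E r (Suc m) x y \<Longrightarrow> Rconn E r m x y"
  unfolding Rconn_def by (rule rtranclp_mono[OF Redge_Suc_le, THEN predicate2D])

lemma blocks_subset_level_set: "C \<in> blocks V E r n \<Longrightarrow> C \<subseteq> level_set V E r n"
  unfolding blocks_def by auto

lemma blocks_nonempty:
  assumes "C \<in> blocks V E r n" shows "C \<noteq> {}"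
proof -
  obtain z where "z \<in> level_set V E r n" "C = {y \<in> level_set V E r n. Rconn E r n z y}"
    using assms unfolding blocks_def by blast
  then have "z \<in> C"
    unfolding Rconn_def by simp
  then show ?thesis
    by blast
qed

lemma Rconn_in_block:
  assumes "symp E" "C \<in> blocks V E r n" "x \<in> C" "y \<in> C"
  shows "Rconn E r n x y"
proof -
  obtain z where "C = {y \<in> level_set V E r n. Rconn E r n z y}"
    using assms(2) unfolding blocks_def by blast
  then have "Rconn E r n z x" "Rconn E r n z y"
    using assms(3,4) by auto
  then show ?thesis
    by (blast intro: Rconn_trans Rconn_sym[OF assms(1)])
qed

lemma blocks_block_adj_rtrancl:
  "(C, D) \<in> (block_adj V E r n)\<^sup>* \<Longrightarrow> C \<in> blocks V E r n \<Longrightarrow> D \<in> blocks V E r n"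
  by (induction rule: rtrancl_induct) (simp_all add: block_adj_def)

lemma bunchesE:
  assumes "B \<in> bunches V E r n"
  obtains B0 where "B0 \<in> blocks V E r n" "B = \<Union> {C. (B0, C) \<in> (block_adj V E r n)\<^sup>*}"
  using assms unfolding bunches_def by blast

lemma bunch_subset_level_set:
  assumes "B \<in> bunches V E r n" shows "B \<subseteq> level_set V E r n"
proof
  fix x assume "x \<in> B"
  obtain B0 where B0: "B0 \<in> blocks V E r n" "B = \<Union> {C. (B0, C) \<in> (block_adj V E r n)\<^sup>*}"
    using assms by (rule bunchesE)
  then obtain C where "(B0, C) \<in> (block_adj V E r n)\<^sup>*" "x \<in> C"
    using \<open>x \<in> B\<close> by blast
  then show "x \<in> level_set V E r n"
    using blocks_subset_level_set[OF blocks_block_adj_rtrancl[OF _ B0(1)]] by blast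
qed

lemma Rconn_block_adj_rtrancl:
  assumes "symp E" "(C, D) \<in> (block_adj V E r (Suc m))\<^sup>*" "C \<in> blocks V E r (Suc m)"
    "x \<in> C" "y \<in> D"
  shows "Rconn E r m x y"
  using assms(2,5)
proof (induction arbitrary: y rule: rtrancl_induct)
  case base
  then show ?case
    by (rule Rconn_Suc_imp[OF Rconn_in_block[OF assms(1,3,4)]])
next
  case (step D D')
  obtain u v where uv: "u \<in> D" "v \<in> D'" "E u v" "D' \<in> blocks V E r (Suc m)"
    using step.hyps(2) unfolding block_adj_def by blast
  have "level E r u = Suc m"
    using uv(1) blocks_subset_level_set[OF blocks_block_adj_rtrancl[OF step.hyps(1) assms(3)]]
    unfolding level_set_def by blast
  then have "Rconn E r m u v"
    using uv(3) by (intro Rconn_if_Redge Redge_if_level_Suc)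
  moreover have "Rconn E r m v y"
    using Rconn_in_block[OF assms(1) uv(4,2) step.prems] by (rule Rconn_Suc_imp)
  ultimately show ?case
    using step.IH[OF uv(1)] by (meson Rconn_trans)
qed

lemma Rconn_in_bunch_Suc:
  assumes "symp E" "B \<in> bunches V E r (Suc m)" "p \<in> B" "q \<in> B"
  shows "Rconn E r m p q"
proof -
  obtain B0 where B0: "B0 \<in> blocks V E r (Suc m)"
    and B: "B = \<Union> {C. (B0, C) \<in> (block_adj V E r (Suc m))\<^sup>*}"
    using assms(2) by (rule bunchesE)
  obtain x where "x \<in> B0"
    using blocks_nonempty[OF B0] by blast
  then have "Rconn E r m x p" "Rconn E r m x q"
    using assms(3,4) B Rconn_block_adj_rtrancl[OF assms(1) _ B0] by blast+
  then show ?thesis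
    by (blast intro: Rconn_trans Rconn_sym[OF assms(1)])
qed

lemma gdist_le_W_root:
  assumes "finite V" "x \<in> V" "y \<in> V" "level E r x = m" "level E r y = m" "Rconn E r m x y"
  shows "gdist E x y \<le> W_root V E r"
proof -
  let ?S = "{gdist E x y | x y n. x \<in> V \<and> y \<in> V \<and> level E r x = n \<and>
      level E r y = n \<and> Rconn E r n x y}"
  have "?S \<subseteq> case_prod (gdist E) ` (V \<times> V)"
    by auto
  then have "finite ?S"
    using assms(1) finite_subset by blast
  moreover have "gdist E x y \<in> ?S"
    using assms(2-6) by blast
  ultimately show ?thesis
    unfolding W_root_def by simp
qed

lemma W_root_le_cycle_width: "finite V \<Longrightarrow> r \<in> V \<Longrightarrow> W_root V E r \<le> cycle_width V E"
  unfolding cycle_width_def by simp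

lemma symp_if_simple_graph: "simple_graph V E \<Longrightarrow> symp E"
  unfolding simple_graph_def by (auto intro: sympI)

lemma rtranclp_if_connected_graph:
  "connected_graph V E \<Longrightarrow> x \<in> V \<Longrightarrow> y \<in> V \<Longrightarrow> E\<^sup>*\<^sup>* x y"
  unfolding connected_graph_def by blast

lemma bunch_0_subset:
  assumes "connected_graph V E" "r \<in> V" "B \<in> bunches V E r 0"
  shows "B \<subseteq> {r}"
  using bunch_subset_level_set[OF assms(3)] level_set_0_subset[OF assms(1,2)] by blast

lemma gdist_le_W_root_add_2_in_bunch_Suc:
  assumes G: "simple_graph V E" "connected_graph V E" "r \<in> V"
    and B: "B \<in> bunches V E r (Suc m)" "p \<in> B" "q \<in> B"
  shows "gdist E p q \<le> W_root V E r + 2"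
proof -
  have fin: "finite V" and edges: "\<And>x y. E x y \<Longrightarrow> x \<in> V \<and> y \<in> V"
    using G(1) unfolding simple_graph_def by blast+
  note sym = symp_if_simple_graph[OF G(1)]
  note conn = rtranclp_if_connected_graph[OF G(2)]
  have p: "p \<in> V" "level E r p = Suc m" and q: "q \<in> V" "level E r q = Suc m"
    using B bunch_subset_level_set[OF B(1)] unfolding level_set_def by auto
  obtain p' where p': "E p' p" "level E r p' = m"
    using level_parentE[OF conn[OF G(3) p(1)] p(2)] .
  obtain q' where q': "E q' q" "level E r q' = m"
    using level_parentE[OF conn[OF G(3) q(1)] q(2)] .
  have "p' \<in> V" "q' \<in> V"
    using edges p'(1) q'(1) by blast+
  have "Rconn E r m p p'" "Rconn E r m q q'"
    using Redge_if_level_Suc[OF p(2) sympD[OF sym p'(1)]]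
      Redge_if_level_Suc[OF q(2) sympD[OF sym q'(1)]] by (simp_all add: Rconn_if_Redge)
  moreover have "Rconn E r m p q"
    using Rconn_in_bunch_Suc[OF sym B] .
  ultimately have "Rconn E r m p' q'"
    by (meson Rconn_sym[OF sym] Rconn_trans)
  then have "gdist E p' q' \<le> W_root V E r"
    by (rule gdist_le_W_root[OF fin \<open>p' \<in> V\<close> \<open>q' \<in> V\<close> p'(2) q'(2)])
  moreover have "gdist E p q \<le> gdist E p' q' + 2"
    using gdist_le_gdist_add_2[OF sympD[OF sym p'(1)] q'(1) conn] \<open>p' \<in> V\<close> \<open>q' \<in> V\<close> .
  ultimately show ?thesis
    by simp
qed

theorem mainTheorem13:
  fixes V :: "'a set" and E :: "'a \<Rightarrow> 'a \<Rightarrow> bool" and r :: 'a and n :: nat and B :: "'a set"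
  assumes "simple_graph V E" and "connected_graph V E" and "r \<in> V"
    and "B \<in> bunches V E r n"
  shows "\<forall>p\<in>B. \<forall>q\<in>B. gdist E p q \<le> cycle_width V E + 2"
proof (intro ballI)
  fix p q assume pq: "p \<in> B" "q \<in> B"
  have "W_root V E r \<le> cycle_width V E"
    using assms(1) W_root_le_cycle_width[OF _ assms(3)] unfolding simple_graph_def by simp
  show "gdist E p q \<le> cycle_width V E + 2"
  proof (cases n)
    case 0
    then have "p = q"
      using pq bunch_0_subset[OF assms(2,3) assms(4)[unfolded 0]] by blast
    then show ?thesis
      by (simp add: gdist_self)
  next
    case (Suc m)
    then have "gdist E p q \<le> W_root V E r + 2"
      using gdist_le_W_root_add_2_in_bunch_Suc[OF assms(1-3) _ pq] assms(4) by simp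
    with \<open>W_root V E r \<le> cycle_width V E\<close> show ?thesis
      by simp
  qed
qed

end
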